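(* Let $\Phi:\ell^\infty(\mathbb Z)\to\ell^\infty(\mathbb Z)$ be a bounded linear map commuting with the backward shift $B$, $(Bv)_n=v_{n+1}$, and let $\mathcal I$ be the identity map. If $\Phi$ is idempotent, then either $\Phi=\Phi^{s}$ (i.e. $\Phi$ is singular), or $\Phi=\mathcal I-\Psi$ where $\Psi$ is a singular, idempotent linear map commuting with $B$.
   Context: For such $\Phi$, let $\phi_0(v)=\Phi(v)_0$, so $\Phi(v)_n=\phi_0(B^nv)$. Write $\phi_0=\phi^{ac}+\phi^s$ with $\phi^{ac}$ weak*-continuous (given by an $\ell^1(\mathbb Z)$ vector) and $\phi^s$ vanishing on $c_0(\mathbb Z)$ (the null sequences), and set $\Phi^{ac}(v)=(\phi^{ac}(B^nv))_n$, $\Phi^s(v)=(\phi^s(B^nv))_n$. A linear map on $\ell^\infty(\mathbb Z)$ is called singular if it annihilates $c_0(\mathbb Z)$. *)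

theory Defs
  imports "HOL-Analysis.Analysis"
begin

text \<open>ell-infinity over the integers: bounded (automatically continuous, since int
  is discrete) real functions on int, i.e. the Banach space (int, real) bcontfun.\<close>

type_synonym linf = "(int, real) bcontfun"

definition backshift :: "linf \<Rightarrow> linf" where
  "backshift v = Bcontfun (\<lambda>n. apply_bcontfun v (n + 1))"

definition c0 :: "linf set" where
  "c0 = {v. (apply_bcontfun v \<longlongrightarrow> 0) at_top \<and> (apply_bcontfun v \<longlongrightarrow> 0) at_bot}"

definition singular_map :: "(linf \<Rightarrow> linf) \<Rightarrow> bool" where
  "singular_map \<Phi> \<longleftrightarrow> (\<forall>v\<in>c0. \<Phi> v = 0)"

end

theory Submission
  imports Defs
begin

(* Idea: on c_0 the operator Phi is determined by its kernel a_k = (Phi e_k)_0. Shift invariance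
   gives (Phi e_k)_n = a_(k-n), boundedness puts a in l^1(Z), and since c_0 is the closed span of
   the unit sequences e_k, Phi v = sum_k v_k Phi e_k for v in c_0. Applying Phi to its fixed point
   Phi e_0, which lies in c_0, shows that a is idempotent under convolution. Its Fourier series is
   then a continuous function with values in {0, 1}, hence constant, and averaging it over the N-th
   roots of unity for large N recovers the coefficients: a = 0 or a = delta_0. So Phi vanishes on
   c_0, or Phi is the identity on c_0 and Psi = I - Phi is the required singular idempotent. *)

section \<open>Idempotents of the convolution algebra \<open>l\<^sup>1(\<int>)\<close>\<close>

lemma has_sum_finite_sum:
  fixes f :: "'i \<Rightarrow> 'a \<Rightarrow> 'b::topological_comm_monoid_add"
  assumes "finite I" "\<And>i. i \<in> I \<Longrightarrow> (f i has_sum s i) A"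
  shows "((\<lambda>x. \<Sum>i\<in>I. f i x) has_sum (\<Sum>i\<in>I. s i)) A"
  using assms by (induction I rule: finite_induct) (auto simp: has_sum_0 intro: has_sum_add)

lemma summable_on_int_shift_iff:
  "(\<lambda>k::int. f (k + c)) summable_on UNIV \<longleftrightarrow> f summable_on UNIV"
  using summable_on_reindex_bij_betw[OF bij_plus_right[of c], of f] by simp

lemma infsum_int_shift:
  "(\<Sum>\<^sub>\<infinity>k::int. f (k + c)) = infsum f UNIV"
  using infsum_reindex_bij_betw[OF bij_plus_right[of c], of f] by simp

lemma int_abs_summable_small_tail:
  fixes f :: "int \<Rightarrow> 'a::real_normed_vector"
  assumes "(\<lambda>k. norm (f k)) summable_on UNIV" "\<epsilon> > 0"
  obtains M where "\<And>S. (\<And>k. k \<in> S \<Longrightarrow> M < \<bar>k\<bar>) \<Longrightarrow> (\<Sum>\<^sub>\<infinity>k\<in>S. norm (f k)) \<le> \<epsilon>"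
proof -
  obtain X where X: "finite X" "dist (\<Sum>k\<in>X. norm (f k)) (\<Sum>\<^sub>\<infinity>k. norm (f k)) \<le> \<epsilon>"
    using infsum_finite_approximation[OF assms] by blast
  obtain M where M: "\<And>x. x \<in> X \<Longrightarrow> \<bar>x\<bar> \<le> M"
    using X(1) by (metis member_le_sum abs_ge_zero)
  have "(\<Sum>\<^sub>\<infinity>k\<in>S. norm (f k)) \<le> \<epsilon>" if S: "\<And>k. k \<in> S \<Longrightarrow> M < \<bar>k\<bar>" for S
  proof -
    have disj: "S \<inter> X = {}" using M S by force
    have sum_S: "(\<lambda>k. norm (f k)) summable_on S"
      using summable_on_subset_banach[OF assms(1)] by blast
    have "(\<Sum>\<^sub>\<infinity>k\<in>S. norm (f k)) + (\<Sum>k\<in>X. norm (f k)) = (\<Sum>\<^sub>\<infinity>k\<in>S \<union> X. norm (f k))"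
      using infsum_Un_disjoint[OF sum_S _ disj] X(1) by simp
    also have "\<dots> \<le> (\<Sum>\<^sub>\<infinity>k. norm (f k))"
      by (rule infsum_mono2) (auto intro: summable_on_subset_banach[OF assms(1)])
    finally show ?thesis using X(2) by (simp add: dist_real_def)
  qed
  then show thesis by (rule that)
qed

definition fourier_series :: "(int \<Rightarrow> complex) \<Rightarrow> real \<Rightarrow> complex" where
  "fourier_series b t = (\<Sum>\<^sub>\<infinity>k. b k * cis (of_int k * t))"

definition convolution ::
    "(int \<Rightarrow> 'a) \<Rightarrow> (int \<Rightarrow> 'a) \<Rightarrow> int \<Rightarrow> 'a::{comm_monoid_add,times,t2_space}" where
  "convolution b c m = (\<Sum>\<^sub>\<infinity>j. b j * c (m - j))"

lemma fourier_series_convolution: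
  fixes b c :: "int \<Rightarrow> complex"
  assumes b: "(\<lambda>k. norm (b k)) summable_on UNIV" and c: "(\<lambda>k. norm (c k)) summable_on UNIV"
  shows "fourier_series (convolution b c) t = fourier_series b t * fourier_series c t"
proof -
  define e where "e k = cis (of_int k * t)" for k :: int
  define h where "h j m = b j * c (m - j) * e m" for j m
  have e_add: "e (j + l) = e j * e l" for j l
    by (simp add: e_def cis_mult distrib_right)
  have norm_h: "norm (h j m) = norm (b j) * norm (c (m - j))" for j m
    by (simp add: h_def e_def norm_mult)
  have row: "(\<lambda>m. norm (c (m - j))) summable_on UNIV" for j
    using summable_on_int_shift_iff[of "\<lambda>k. norm (c k)" "- j"] c by simp
  have row_sum: "(\<Sum>\<^sub>\<infinity>m. norm (h j m)) = norm (b j) * (\<Sum>\<^sub>\<infinity>k. norm (c k))" for j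
    using infsum_int_shift[of "\<lambda>k. norm (c k)" "- j"]
    by (simp add: norm_h infsum_cmult_right')
  have "(\<lambda>j. norm (\<Sum>\<^sub>\<infinity>m. norm (h j m))) summable_on UNIV"
    using summable_on_cmult_left[OF b] by (simp add: row_sum infsum_nonneg)
  moreover have "(\<lambda>m. norm (h j m)) summable_on UNIV" for j
    using summable_on_cmult_right[OF row] by (simp add: norm_h)
  ultimately have "(\<lambda>x. norm (case x of (j, m) \<Rightarrow> h j m)) summable_on UNIV \<times> UNIV"
    by (intro Infinite_Sum.abs_summable_on_Sigma_iff[THEN iffD2]) auto
  then have h_summable: "(\<lambda>(j, m). h j m) summable_on UNIV \<times> UNIV"
    by (rule abs_summable_summable)
  have "fourier_series b t * fourier_series c t = (\<Sum>\<^sub>\<infinity>j. b j * e j * (\<Sum>\<^sub>\<infinity>l. c l * e l))"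
    unfolding fourier_series_def e_def by (rule infsum_cmult_left'[symmetric])
  also have "\<dots> = (\<Sum>\<^sub>\<infinity>j. \<Sum>\<^sub>\<infinity>l. h j (l + j))"
    by (simp add: h_def e_add infsum_cmult_right'[symmetric] mult_ac)
  also have "\<dots> = (\<Sum>\<^sub>\<infinity>j. \<Sum>\<^sub>\<infinity>m. h j m)"
    by (simp add: infsum_int_shift[of "h _"])
  also have "\<dots> = (\<Sum>\<^sub>\<infinity>m. \<Sum>\<^sub>\<infinity>j. h j m)"
    by (rule infsum_swap_banach[OF h_summable])
  also have "\<dots> = fourier_series (convolution b c) t"
    by (simp add: fourier_series_def convolution_def h_def e_def infsum_cmult_left')
  finally show ?thesis ..
qed

lemma continuous_on_fourier_series:
  assumes b: "(\<lambda>k. norm (b k)) summable_on UNIV"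
  shows "continuous_on UNIV (fourier_series b)"
proof (rule uniform_limit_theorem)
  show "\<forall>\<^sub>F F in finite_subsets_at_top UNIV.
          continuous_on UNIV (\<lambda>t. \<Sum>k\<in>F. b k * cis (of_int k * t))"
    by (intro eventually_finite_subsets_at_top_weakI) (auto intro!: continuous_intros)
  show "uniform_limit UNIV (\<lambda>F t. \<Sum>k\<in>F. b k * cis (of_int k * t)) (fourier_series b)
          (finite_subsets_at_top UNIV)"
    unfolding uniform_limit_iff
  proof (intro allI impI)
    fix \<epsilon> :: real
    assume "\<epsilon> > 0"
    then obtain M where M: "\<And>S. (\<And>k. k \<in> S \<Longrightarrow> M < \<bar>k\<bar>) \<Longrightarrow> (\<Sum>\<^sub>\<infinity>k\<in>S. norm (b k)) \<le> \<epsilon> / 2"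
      using int_abs_summable_small_tail[OF b, of "\<epsilon> / 2"] by auto
    have "dist (\<Sum>k\<in>Y. b k * cis (of_int k * t)) (fourier_series b t) < \<epsilon>"
      if Y: "finite Y" "{-M..M} \<subseteq> Y" for Y t
    proof -
      define g where "g k = b k * cis (of_int k * t)" for k
      have norm_g: "norm (g k) = norm (b k)" for k
        by (simp add: g_def norm_mult)
      have g_summable: "g summable_on A" and norm_g_summable: "(\<lambda>k. norm (g k)) summable_on A" for A
        using summable_on_subset_banach[OF b, of A]
        by (auto simp: norm_g intro: abs_summable_summable)
      have "fourier_series b t = (\<Sum>k\<in>Y. g k) + infsum g (- Y)"
        using infsum_Un_disjoint[OF g_summable g_summable, of Y "- Y"] Y(1)
        by (simp add: fourier_series_def g_def[abs_def])
      moreover have "norm (infsum g (- Y)) \<le> (\<Sum>\<^sub>\<infinity>k\<in>- Y. norm (b k))"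
        using norm_infsum_bound[OF norm_g_summable] by (simp add: norm_g)
      moreover have "M < \<bar>k\<bar>" if "k \<in> - Y" for k
      proof (rule ccontr)
        assume "\<not> M < \<bar>k\<bar>"
        then have "k \<in> {-M..M}" by auto
        then show False using that Y(2) by auto
      qed
      then have "(\<Sum>\<^sub>\<infinity>k\<in>- Y. norm (b k)) \<le> \<epsilon> / 2"
        by (rule M)
      ultimately show ?thesis
        using \<open>\<epsilon> > 0\<close> by (simp add: g_def dist_norm)
    qed
    then show "\<forall>\<^sub>F Y in finite_subsets_at_top UNIV. \<forall>t\<in>UNIV.
                 dist (\<Sum>k\<in>Y. b k * cis (of_int k * t)) (fourier_series b t) < \<epsilon>"
      unfolding eventually_finite_subsets_at_top by (intro exI[of _ "{-M..M}"]) auto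
  qed
qed simp

lemma sum_roots_of_unity:
  fixes l :: int
  assumes N: "N > 0"
  shows "(\<Sum>j<N. cis (2 * pi * of_int l * real j / real N)) = (if int N dvd l then of_nat N else 0)"
proof -
  define \<omega> where "\<omega> = cis (2 * pi * of_int l / real N)"
  have power_\<omega>: "\<omega> ^ j = cis (2 * pi * of_int l * real j / real N)" for j
    unfolding \<omega>_def Complex.DeMoivre by (simp add: mult_ac)
  show ?thesis
  proof (cases "int N dvd l")
    case True
    then obtain q where "l = int N * q" by blast
    then have "2 * pi * of_int l * real j / real N = 2 * pi * of_int (q * int j)" for j
      using N by (simp add: field_simps)
    then show ?thesis
      using True by (simp add: cis_multiple_2pi)
  next
    case False
    have "\<omega> \<noteq> 1"
    proof
      assume "\<omega> = 1"
      then have "cos (2 * pi * of_int l / real N) = 1"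
        unfolding \<omega>_def by (metis cis.sel(1) one_complex.sel(1))
      then obtain n :: int where "2 * pi * of_int l / real N = of_int n * (2 * pi)"
        by (auto simp: cos_one_2pi_int)
      then have "of_int l = (of_int (n * int N) :: real)"
        using N by (simp add: field_simps)
      then show False
        using False by (metis dvd_triv_right of_int_eq_iff)
    qed
    moreover have "\<omega> ^ N = 1"
      using N by (simp add: power_\<omega> cis_multiple_2pi)
    ultimately show ?thesis
      using False by (simp add: power_\<omega>[symmetric] geometric_sum)
  qed
qed

lemma fourier_series_roots_of_unity_average:
  fixes b :: "int \<Rightarrow> complex"
  assumes b: "(\<lambda>k. norm (b k)) summable_on UNIV" and N: "N > 0"
  shows "(\<Sum>j<N. fourier_series b (2 * pi * real j / real N) * cis (2 * pi * of_int (- m) * real j / real N))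
           = of_nat N * (\<Sum>\<^sub>\<infinity>k\<in>{k. int N dvd k - m}. b k)"
proof -
  define f where "f j k = b k * cis (2 * pi * of_int (k - m) * real j / real N)" for j :: nat and k
  have f_summable: "f j summable_on UNIV" for j
    by (rule abs_summable_summable) (simp add: f_def norm_mult b)
  have "fourier_series b (2 * pi * real j / real N) * cis (2 * pi * of_int (- m) * real j / real N)
          = infsum (f j) UNIV" for j
  proof -
    have "of_int k * (2 * pi * real j / real N) + 2 * pi * of_int (- m) * real j / real N
            = 2 * pi * of_int (k - m) * real j / real N" for k
      using N by (simp add: field_simps)
    then show ?thesis
      unfolding fourier_series_def f_def infsum_cmult_left'[symmetric]
      by (simp add: mult.assoc cis_mult)
  qed
  then have "(\<Sum>j<N. fourier_series b (2 * pi * real j / real N) * cis (2 * pi * of_int (- m) * real j / real N))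
               = (\<Sum>\<^sub>\<infinity>k. \<Sum>j<N. f j k)"
    using has_sum_finite_sum[of "{..<N}" f UNIV "\<lambda>j. infsum (f j) UNIV"] f_summable
    by (simp add: infsumI)
  also have "\<dots> = (\<Sum>\<^sub>\<infinity>k. b k * (if int N dvd k - m then of_nat N else 0))"
    unfolding f_def sum_distrib_left[symmetric] sum_roots_of_unity[OF N] ..
  also have "\<dots> = (\<Sum>\<^sub>\<infinity>k\<in>{k. int N dvd k - m}. of_nat N * b k)"
    by (rule infsum_cong_neutral) auto
  also have "\<dots> = of_nat N * (\<Sum>\<^sub>\<infinity>k\<in>{k. int N dvd k - m}. b k)"
    by (rule infsum_cmult_right')
  finally show ?thesis .
qed

lemma residue_class_infsum_approx:
  fixes b :: "int \<Rightarrow> 'a::banach"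
  assumes b: "(\<lambda>k. norm (b k)) summable_on UNIV" and "\<epsilon> > 0"
  obtains N where "N > 0" "int N dvd m \<longleftrightarrow> m = 0"
    "norm (b m - (\<Sum>\<^sub>\<infinity>k\<in>{k. int N dvd k - m}. b k)) \<le> \<epsilon>"
proof -
  obtain M where M: "\<And>S. (\<And>k. k \<in> S \<Longrightarrow> M < \<bar>k\<bar>) \<Longrightarrow> (\<Sum>\<^sub>\<infinity>k\<in>S. norm (b k)) \<le> \<epsilon>"
    using int_abs_summable_small_tail[OF b \<open>\<epsilon> > 0\<close>] by auto
  \<comment> \<open>For a period \<open>N > |M| + |m|\<close> the residue class of \<open>m\<close> meets \<open>[-M, M]\<close> at most in \<open>m\<close>.\<close>
  define N where "N = nat (\<bar>M\<bar> + \<bar>m\<bar>) + 1"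
  define D where "D = {k. int N dvd k - m}"
  have N_large: "\<bar>M\<bar> + \<bar>m\<bar> < int N" and "N > 0"
    by (simp_all add: N_def)
  have "M < \<bar>k\<bar>" if k: "k \<in> D - {m}" for k
  proof -
    have "int N \<le> \<bar>k - m\<bar>"
      using dvd_imp_le_int[of "k - m" "int N"] k by (simp add: D_def)
    then show ?thesis
      using N_large by linarith
  qed
  then have tail: "(\<Sum>\<^sub>\<infinity>k\<in>D - {m}. norm (b k)) \<le> \<epsilon>"
    by (rule M)
  have "int N dvd m \<longleftrightarrow> m = 0"
  proof
    assume "int N dvd m"
    show "m = 0"
    proof (rule ccontr)
      assume "m \<noteq> 0"
      then have "int N \<le> \<bar>m\<bar>"
        using dvd_imp_le_int[of m "int N"] \<open>int N dvd m\<close> by simp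
      with N_large show False
        by linarith
    qed
  qed simp
  moreover have "b m - infsum b D = - infsum b (D - {m})"
    using infsum_insert[of b "D - {m}" m] summable_on_subset_banach[OF b, of "D - {m}"]
    by (simp add: D_def insert_absorb abs_summable_summable)
  moreover have "norm (infsum b (D - {m})) \<le> (\<Sum>\<^sub>\<infinity>k\<in>D - {m}. norm (b k))"
    by (rule norm_infsum_bound, rule summable_on_subset_banach[OF b]) simp
  ultimately show thesis
    using that[OF \<open>N > 0\<close>] tail by (simp add: D_def)
qed

lemma fourier_series_eq_const_imp:
  fixes b :: "int \<Rightarrow> complex"
  assumes b: "(\<lambda>k. norm (b k)) summable_on UNIV" and const: "\<And>t. fourier_series b t = c"
  shows "b m = (if m = 0 then c else 0)"
proof -
  have residue_sum: "(\<Sum>\<^sub>\<infinity>k\<in>{k. int N dvd k - m}. b k) = (if int N dvd m then c else 0)"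
    if N: "N > 0" for N
  proof -
    have "of_nat N * (\<Sum>\<^sub>\<infinity>k\<in>{k. int N dvd k - m}. b k)
            = (\<Sum>j<N. fourier_series b (2 * pi * real j / real N) * cis (2 * pi * of_int (- m) * real j / real N))"
      by (rule fourier_series_roots_of_unity_average[OF b N, symmetric])
    also have "\<dots> = c * (\<Sum>j<N. cis (2 * pi * of_int (- m) * real j / real N))"
      by (simp only: const sum_distrib_left)
    also have "\<dots> = c * (if int N dvd - m then of_nat N else 0)"
      by (simp only: sum_roots_of_unity[OF N])
    also have "\<dots> = of_nat N * (if int N dvd m then c else 0)"
      by simp
    finally show ?thesis
      using N by simp
  qed
  have "norm (b m - (if m = 0 then c else 0)) \<le> \<epsilon>" if "\<epsilon> > 0" for \<epsilon>
  proof -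
    obtain N where "N > 0" "int N dvd m \<longleftrightarrow> m = 0"
      "norm (b m - (\<Sum>\<^sub>\<infinity>k\<in>{k. int N dvd k - m}. b k)) \<le> \<epsilon>"
      using residue_class_infsum_approx[OF b \<open>\<epsilon> > 0\<close>] .
    then show ?thesis
      using residue_sum[OF \<open>N > 0\<close>] by simp
  qed
  then have "norm (b m - (if m = 0 then c else 0)) \<le> 0"
    by (rule field_le_epsilon) simp
  then show ?thesis by simp
qed

lemma convolution_idempotent_cases:
  fixes b :: "int \<Rightarrow> complex"
  assumes b: "(\<lambda>k. norm (b k)) summable_on UNIV" and idem: "convolution b b = b"
  shows "b = (\<lambda>_. 0) \<or> b = (\<lambda>m. if m = 0 then 1 else 0)"
proof -
  have range01: "fourier_series b t \<in> {0, 1}" for t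
    using fourier_series_convolution[OF b b, of t] mult_cancel_right1[of "fourier_series b t"]
    by (simp add: idem)
  have "fourier_series b constant_on UNIV"
    using continuous_on_fourier_series[OF b] finite_subset[of "range (fourier_series b)" "{0, 1}"] range01
    by (intro continuous_finite_range_constant) auto
  then obtain c where const: "\<And>t. fourier_series b t = c"
    by (auto simp: constant_on_def)
  then have "b = (\<lambda>m. if m = 0 then c else 0)"
    by (intro ext fourier_series_eq_const_imp[OF b])
  moreover have "c \<in> {0, 1}"
    using range01[of 0] by (simp add: const)
  ultimately show ?thesis
    by auto
qed

lemma convolution_idempotent_real_cases:
  fixes a :: "int \<Rightarrow> real"
  assumes a: "a summable_on UNIV" and idem: "convolution a a = a"
  shows "a = (\<lambda>_. 0) \<or> a = (\<lambda>m. if m = 0 then 1 else 0)"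
proof -
  define b where "b k = complex_of_real (a k)" for k
  have abs_a: "(\<lambda>k. \<bar>a k\<bar>) summable_on UNIV"
    using summable_on_iff_abs_summable_on_real[THEN iffD1, OF a] by simp
  have "convolution b b m = b m" for m
  proof -
    have "\<bar>a (m - j)\<bar> \<le> (\<Sum>\<^sub>\<infinity>k. \<bar>a k\<bar>)" for j
    proof -
      have "(\<Sum>k\<in>{m - j}. \<bar>a k\<bar>) \<le> (\<Sum>\<^sub>\<infinity>k. \<bar>a k\<bar>)"
        by (rule finite_sum_le_infsum[OF abs_a]) auto
      then show ?thesis by simp
    qed
    then have "(\<lambda>j. \<bar>a j * a (m - j)\<bar>) summable_on UNIV"
      using summable_on_cmult_left[OF abs_a, of "\<Sum>\<^sub>\<infinity>k. \<bar>a k\<bar>"]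
      by (rule_tac summable_on_comparison_test) (auto simp: abs_mult mult_left_mono)
    then have "(\<lambda>j. a j * a (m - j)) summable_on UNIV"
      by (subst summable_on_iff_abs_summable_on_real) simp
    then have "((\<lambda>j. complex_of_real (a j * a (m - j))) has_sum complex_of_real (convolution a a m)) UNIV"
      unfolding convolution_def by (rule has_sum_of_real[OF has_sum_infsum])
    then have "((\<lambda>j. b j * b (m - j)) has_sum b m) UNIV"
      by (simp add: b_def idem)
    then show ?thesis
      by (simp add: convolution_def infsumI)
  qed
  moreover have "(\<lambda>k. norm (b k)) summable_on UNIV"
    using abs_a by (simp add: b_def)
  ultimately have "b = (\<lambda>_. 0) \<or> b = (\<lambda>m. if m = 0 then 1 else 0)"
    by (intro convolution_idempotent_cases) auto
  moreover have "a = (\<lambda>k. Re (b k))"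
    by (simp add: b_def)
  ultimately show ?thesis
    by (auto simp: fun_eq_iff)
qed

section \<open>Shift-invariant operators on \<open>l\<^sup>\<infinity>(\<int>)\<close>\<close>

definition unit_seq :: "int \<Rightarrow> linf" where
  "unit_seq k = Bcontfun (\<lambda>n. if n = k then 1 else 0)"

lemma apply_Bcontfun_bounded:
  fixes f :: "int \<Rightarrow> real"
  assumes "\<And>n. \<bar>f n\<bar> \<le> B"
  shows "apply_bcontfun (Bcontfun f) = f"
  by (rule Bcontfun_inverse[OF bcontfun_normI[where b = B]]) (auto simp: assms)

lemma apply_unit_seq [simp]: "apply_bcontfun (unit_seq k) n = (if n = k then 1 else 0)"
  unfolding unit_seq_def by (subst apply_Bcontfun_bounded[where B = 1]) auto

lemma apply_backshift [simp]: "apply_bcontfun (backshift v) n = apply_bcontfun v (n + 1)"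
  unfolding backshift_def using norm_bounded[of v]
  by (subst apply_Bcontfun_bounded[where B = "norm v"]) auto

lemma backshift_unit_seq: "backshift (unit_seq (k + 1)) = unit_seq k"
  by (rule bcontfun_eqI) simp

lemma linear_backshift: "linear backshift"
  by (rule linearI) (auto intro: bcontfun_eqI)

lemma apply_bcontfun_sum: "apply_bcontfun (sum f F) x = (\<Sum>i\<in>F. apply_bcontfun (f i) x)"
  by (induction F rule: infinite_finite_induct) auto

lemma bounded_linear_apply_bcontfun:
  "bounded_linear (\<lambda>f :: ('a::topological_space, 'b::real_normed_vector) bcontfun. apply_bcontfun f x)"
  by (rule bounded_linear_intro[where K = 1]) (auto simp: norm_bounded)

lemma c0_has_sum_unit_seq:
  assumes "v \<in> c0"
  shows "((\<lambda>k. apply_bcontfun v k *\<^sub>R unit_seq k) has_sum v) UNIV"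
  unfolding has_sum_def
proof (rule tendstoI)
  fix \<epsilon> :: real
  assume "\<epsilon> > 0"
  have "\<forall>\<^sub>F k in at_top. \<bar>apply_bcontfun v k\<bar> < \<epsilon> / 2" "\<forall>\<^sub>F k in at_bot. \<bar>apply_bcontfun v k\<bar> < \<epsilon> / 2"
    using assms \<open>\<epsilon> > 0\<close> by (auto simp: c0_def dest!: tendstoD[of _ 0 _ "\<epsilon> / 2"])
  then obtain M1 M2 where M1: "\<And>k. M1 \<le> k \<Longrightarrow> \<bar>apply_bcontfun v k\<bar> < \<epsilon> / 2"
    and M2: "\<And>k. k \<le> M2 \<Longrightarrow> \<bar>apply_bcontfun v k\<bar> < \<epsilon> / 2"
    unfolding eventually_at_top_linorder eventually_at_bot_linorder by blast
  have "dist (\<Sum>k\<in>F. apply_bcontfun v k *\<^sub>R unit_seq k) v < \<epsilon>" if F: "finite F" "{M2..M1} \<subseteq> F" for F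
  proof -
    have "norm ((\<Sum>k\<in>F. apply_bcontfun v k *\<^sub>R unit_seq k) - v) \<le> \<epsilon> / 2"
    proof (rule norm_bound)
      fix n
      have "apply_bcontfun (\<Sum>k\<in>F. apply_bcontfun v k *\<^sub>R unit_seq k) n
              = (if n \<in> F then apply_bcontfun v n else 0)"
        using F(1) by (simp add: apply_bcontfun_sum if_distrib cong: if_cong)
      moreover have "M1 \<le> n \<or> n \<le> M2" if "n \<notin> F"
      proof (rule ccontr)
        assume "\<not> (M1 \<le> n \<or> n \<le> M2)"
        then have "n \<in> {M2..M1}" by auto
        with F(2) that show False by blast
      qed
      ultimately show "norm (apply_bcontfun ((\<Sum>k\<in>F. apply_bcontfun v k *\<^sub>R unit_seq k) - v) n) \<le> \<epsilon> / 2"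
        using M1[of n] M2[of n] \<open>\<epsilon> > 0\<close> by (cases "n \<in> F") auto
    qed
    then show ?thesis
      using \<open>\<epsilon> > 0\<close> by (simp add: dist_norm)
  qed
  then show "\<forall>\<^sub>F F in finite_subsets_at_top UNIV.
               dist (\<Sum>k\<in>F. apply_bcontfun v k *\<^sub>R unit_seq k) v < \<epsilon>"
    unfolding eventually_finite_subsets_at_top by (intro exI[of _ "{M2..M1}"]) auto
qed

lemma bounded_linear_c0_has_sum:
  assumes "bounded_linear \<Phi>" and "v \<in> c0"
  shows "((\<lambda>k. apply_bcontfun v k *\<^sub>R \<Phi> (unit_seq k)) has_sum \<Phi> v) UNIV"
  using has_sum_bounded_linear[OF assms(1) c0_has_sum_unit_seq[OF assms(2)]]
  by (simp add: linear_cmul[OF bounded_linear.linear[OF assms(1)]])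

lemma bounded_linear_eq_on_c0:
  assumes "bounded_linear \<Phi>" "bounded_linear \<Psi>" "\<And>k. \<Phi> (unit_seq k) = \<Psi> (unit_seq k)"
    and "v \<in> c0"
  shows "\<Phi> v = \<Psi> v"
  using bounded_linear_c0_has_sum[OF assms(1,4)] bounded_linear_c0_has_sum[OF assms(2,4)]
  by (simp add: assms(3) has_sum_unique)

lemma bounded_linear_unit_seq_summable:
  fixes \<Phi> :: "linf \<Rightarrow> linf"
  assumes "bounded_linear \<Phi>"
  shows "(\<lambda>k. apply_bcontfun (\<Phi> (unit_seq k)) n) summable_on UNIV"
proof -
  define r where "r k = apply_bcontfun (\<Phi> (unit_seq k)) n" for k
  obtain K where K: "\<And>v. norm (\<Phi> v) \<le> norm v * K" and "K > 0"
    using bounded_linear.pos_bounded[OF assms] by blast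
  have "(\<Sum>k\<in>F. \<bar>r k\<bar>) \<le> K" if "finite F" for F
  proof -
    \<comment> \<open>Test \<open>\<Phi>\<close> on the sign pattern of row \<open>n\<close>, a vector of norm at most one.\<close>
    define v where "v = (\<Sum>k\<in>F. sgn (r k) *\<^sub>R unit_seq k)"
    have "norm v \<le> 1"
      using \<open>finite F\<close> by (intro norm_bound) (simp add: v_def apply_bcontfun_sum abs_sgn_eq if_distrib cong: if_cong)
    have "(\<Sum>k\<in>F. \<bar>r k\<bar>) = apply_bcontfun (\<Phi> v) n"
      by (simp add: v_def r_def linear_sum[OF bounded_linear.linear[OF assms]]
          linear_cmul[OF bounded_linear.linear[OF assms]] apply_bcontfun_sum abs_sgn mult.commute)
    also have "\<dots> \<le> norm (\<Phi> v)"
      using norm_bounded[of "\<Phi> v" n] by simp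
    also have "\<dots> \<le> norm v * K"
      by (rule K)
    also have "\<dots> \<le> K"
      using \<open>norm v \<le> 1\<close> \<open>K > 0\<close> by (intro mult_left_le_one_le) auto
    finally show ?thesis .
  qed
  then have "(\<lambda>k. \<bar>r k\<bar>) summable_on UNIV"
    by (intro nonneg_bdd_above_summable_on bdd_aboveI) auto
  then show ?thesis
    unfolding r_def[symmetric] by (subst summable_on_iff_abs_summable_on_real) simp
qed

text \<open>The kernel is the \<open>l\<^sup>1\<close> vector representing the weak*-continuous part
  \<open>\<phi>\<^sup>a\<^sup>c\<close> of the functional \<open>\<phi>\<^sub>0 v = (\<Phi> v)\<^sub>0\<close>.\<close>

definition shift_kernel :: "(linf \<Rightarrow> linf) \<Rightarrow> int \<Rightarrow> real" where
  "shift_kernel \<Phi> k = apply_bcontfun (\<Phi> (unit_seq k)) 0"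

lemma summable_shift_kernel:
  assumes "bounded_linear \<Phi>"
  shows "shift_kernel \<Phi> summable_on UNIV"
  using bounded_linear_unit_seq_summable[OF assms, of 0] by (simp add: shift_kernel_def[abs_def])

lemma apply_shift_invariant_unit_seq:
  assumes comm: "\<And>v. \<Phi> (backshift v) = backshift (\<Phi> v)"
  shows "apply_bcontfun (\<Phi> (unit_seq k)) n = shift_kernel \<Phi> (k - n)"
proof -
  have step: "apply_bcontfun (\<Phi> (unit_seq (k + 1))) (n + 1) = apply_bcontfun (\<Phi> (unit_seq k)) n" for k n
    using arg_cong[OF comm[of "unit_seq (k + 1)"], of "\<lambda>v. apply_bcontfun v n"]
    by (simp add: backshift_unit_seq)
  have "\<forall>k. apply_bcontfun (\<Phi> (unit_seq k)) n = shift_kernel \<Phi> (k - n)"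
  proof (induction n rule: int_induct[where k = 0])
    case base
    then show ?case by (simp add: shift_kernel_def)
  next
    case (step1 i)
    then show ?case
      using step[of "_ - 1" i] by (simp add: algebra_simps)
  next
    case (step2 i)
    then show ?case
      using step[of _ "i - 1"] by (simp add: algebra_simps)
  qed
  then show ?thesis by blast
qed

lemma summable_in_c0:
  assumes "apply_bcontfun v summable_on UNIV"
  shows "v \<in> c0"
proof -
  have abs_v: "(\<lambda>n. norm (apply_bcontfun v n)) summable_on UNIV"
    using assms by (subst (asm) summable_on_iff_abs_summable_on_real)
  have small: "\<exists>M. \<forall>n. M < \<bar>n\<bar> \<longrightarrow> dist (apply_bcontfun v n) 0 < \<epsilon>" if "\<epsilon> > 0" for \<epsilon>
  proof -
    obtain M where M: "\<And>S. (\<And>n. n \<in> S \<Longrightarrow> M < \<bar>n\<bar>) \<Longrightarrow> (\<Sum>\<^sub>\<infinity>n\<in>S. norm (apply_bcontfun v n)) \<le> \<epsilon> / 2"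
      using int_abs_summable_small_tail[OF abs_v, of "\<epsilon> / 2"] \<open>\<epsilon> > 0\<close> by auto
    have "dist (apply_bcontfun v n) 0 < \<epsilon>" if "M < \<bar>n\<bar>" for n
      using M[of "{n}"] that \<open>\<epsilon> > 0\<close> by simp
    then show ?thesis by blast
  qed
  have "(apply_bcontfun v \<longlongrightarrow> 0) at_top"
  proof (rule tendstoI)
    fix \<epsilon> :: real
    assume "\<epsilon> > 0"
    with small obtain M where "\<And>n. M < \<bar>n\<bar> \<Longrightarrow> dist (apply_bcontfun v n) 0 < \<epsilon>" by blast
    then show "\<forall>\<^sub>F n in at_top. dist (apply_bcontfun v n) 0 < \<epsilon>"
      unfolding eventually_at_top_linorder by (intro exI[of _ "\<bar>M\<bar> + 1"]) auto
  qed
  moreover have "(apply_bcontfun v \<longlongrightarrow> 0) at_bot"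
  proof (rule tendstoI)
    fix \<epsilon> :: real
    assume "\<epsilon> > 0"
    with small obtain M where "\<And>n. M < \<bar>n\<bar> \<Longrightarrow> dist (apply_bcontfun v n) 0 < \<epsilon>" by blast
    then show "\<forall>\<^sub>F n in at_bot. dist (apply_bcontfun v n) 0 < \<epsilon>"
      unfolding eventually_at_bot_linorder by (intro exI[of _ "- \<bar>M\<bar> - 1"]) auto
  qed
  ultimately show ?thesis
    by (simp add: c0_def)
qed

lemma shift_kernel_convolution_idempotent:
  fixes \<Phi> :: "linf \<Rightarrow> linf"
  assumes bl: "bounded_linear \<Phi>" and comm: "\<And>v. \<Phi> (backshift v) = backshift (\<Phi> v)"
    and idem: "\<Phi> \<circ> \<Phi> = \<Phi>"
  shows "convolution (shift_kernel \<Phi>) (shift_kernel \<Phi>) = shift_kernel \<Phi>"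
proof
  fix m
  define a where "a = shift_kernel \<Phi>"
  define w where "w = \<Phi> (unit_seq 0)"
  have apply_w: "apply_bcontfun w = (\<lambda>n. a (- n))"
    by (simp add: fun_eq_iff w_def a_def apply_shift_invariant_unit_seq[of \<Phi>, OF comm])
  have "a summable_on UNIV"
    unfolding a_def using bl by (rule summable_shift_kernel)
  then have "apply_bcontfun w summable_on UNIV"
    using summable_on_reindex_bij_betw[OF bij_uminus, of a] by (simp add: apply_w)
  then have "w \<in> c0"
    by (rule summable_in_c0)
  \<comment> \<open>\<open>w = \<Phi> e\<^sub>0\<close> is a fixed point of \<open>\<Phi>\<close>; expanding \<open>\<Phi> w\<close> along the unit sequences gives \<open>a = a * a\<close>.\<close>
  then have "((\<lambda>k. apply_bcontfun w k * apply_bcontfun (\<Phi> (unit_seq k)) (- m)) has_sum apply_bcontfun (\<Phi> w) (- m)) UNIV"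
    using has_sum_bounded_linear[OF bounded_linear_apply_bcontfun bounded_linear_c0_has_sum[OF bl]] by simp
  moreover have "\<Phi> w = w"
    using fun_cong[OF idem, of "unit_seq 0"] by (simp add: w_def)
  ultimately have "((\<lambda>k. a (- k) * a (m - - k)) has_sum a m) UNIV"
    by (simp add: apply_w apply_shift_invariant_unit_seq[of \<Phi>, OF comm] a_def add.commute)
  then have "((\<lambda>j. a j * a (m - j)) has_sum a m) UNIV"
    using has_sum_reindex_bij_betw[OF bij_uminus, of "\<lambda>j. a j * a (m - j)"] by simp
  then show "convolution a a m = a m"
    by (simp add: convolution_def infsumI)
qed

lemma complementary_projection:
  fixes \<Phi> T :: "'a::real_vector \<Rightarrow> 'a"
  assumes "linear \<Phi>" "\<Phi> \<circ> \<Phi> = \<Phi>" "linear T" "\<And>v. \<Phi> (T v) = T (\<Phi> v)"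
  shows "linear (\<lambda>v. v - \<Phi> v)" "(\<lambda>v. v - \<Phi> v) \<circ> (\<lambda>v. v - \<Phi> v) = (\<lambda>v. v - \<Phi> v)"
    "\<And>v. T v - \<Phi> (T v) = T (v - \<Phi> v)"
  using assms by (auto simp: linear_compose_sub linear_id[unfolded id_def] linear_diff fun_eq_iff)

theorem theorem2p3:
  fixes \<Phi> :: "linf \<Rightarrow> linf"
  assumes "bounded_linear \<Phi>"
    and "\<forall>v. \<Phi> (backshift v) = backshift (\<Phi> v)"
    and "\<Phi> \<circ> \<Phi> = \<Phi>"
  shows "singular_map \<Phi> \<or>
    (\<exists>\<Psi> :: linf \<Rightarrow> linf. linear \<Psi> \<and> singular_map \<Psi> \<and> \<Psi> \<circ> \<Psi> = \<Psi> \<and>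
        (\<forall>v. \<Psi> (backshift v) = backshift (\<Psi> v)) \<and>
        \<Phi> = (\<lambda>v. v - \<Psi> v))"
proof -
  note bl = assms(1) and idem = assms(3)
  have comm: "\<And>v. \<Phi> (backshift v) = backshift (\<Phi> v)"
    using assms(2) by blast
  have kernel: "apply_bcontfun (\<Phi> (unit_seq k)) n = shift_kernel \<Phi> (k - n)" for k n
    by (rule apply_shift_invariant_unit_seq[of \<Phi>, OF comm])
  have "shift_kernel \<Phi> = (\<lambda>_. 0) \<or> shift_kernel \<Phi> = (\<lambda>m. if m = 0 then 1 else 0)"
    using summable_shift_kernel[OF bl] shift_kernel_convolution_idempotent[OF bl comm idem]
    by (rule convolution_idempotent_real_cases)
  then show ?thesis
  proof
    assume "shift_kernel \<Phi> = (\<lambda>_. 0)"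
    then have "\<Phi> (unit_seq k) = 0" for k
      by (intro bcontfun_eqI) (simp add: kernel)
    then have "singular_map \<Phi>"
      using bounded_linear_eq_on_c0[OF bl bounded_linear_zero] by (simp add: singular_map_def)
    then show ?thesis ..
  next
    assume "shift_kernel \<Phi> = (\<lambda>m. if m = 0 then 1 else 0)"
    then have "\<Phi> (unit_seq k) = unit_seq k" for k
      by (intro bcontfun_eqI) (simp add: kernel)
    then have "singular_map (\<lambda>v. v - \<Phi> v)"
      using bounded_linear_eq_on_c0[OF bl bounded_linear_ident] by (simp add: singular_map_def)
    moreover note complementary_projection[OF bounded_linear.linear[OF bl] idem linear_backshift comm]
    ultimately show ?thesis
      by (intro disjI2 exI[of _ "\<lambda>v. v - \<Phi> v"]) auto
  qed
qed

end
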